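(* Consider an inventory system as in the context, and suppose in addition that $G$ is twice differentiable on $(0,\infty)$ with $l\le G''(y)\le L$ for all $y>0$, for constants $0<l\le L$. Let $$M=\frac{\Delta+\sum_{k=0}^{N-1}\mu_k}{N},\qquad u=\mathrm{LS}(\mu_0+\Delta,\mu_1,\dots,\mu_{N-1}),$$ $$S_u=\sum_{k=0}^{N-1}(u_k-M)^2,\qquad S_\mu=(\mu_0+\Delta-M)^2+\sum_{k=1}^{N-1}(\mu_k-M)^2.$$ Then $$J_{\pi^{\mathrm{my}}}(0)-J^*(0)\ \ge\ \frac{l}{2}\Big(S_\mu+\sum_{k=0}^{N-2}\sigma_k^2\Big)-\frac{L}{2}\Big(S_u+\sum_{k=0}^{N-2}\sigma_k^2\Big).$$
   Context: Inventory system: $N\ge1$; $G:\mathbb{R}_{\ge0}\to\mathbb{R}_{\ge0}$ is strictly convex and increasing with $G(0)=0$. Demands $w_0,\dots,w_{N-1}$ are independent random variables; $w_k$ has mean $\mu_k$, variance $\sigma_k^2$, and support exactly $[\mu_k-\Delta,\mu_k+\Delta]$, where $\Delta\ge0$ and $\mu_k-\Delta>0$ for all $k$. A (Markov) policy is a sequence $\pi=(\pi_0,\dots,\pi_{N-1})$ of measurable maps $\pi_k:\mathbb{R}_{\ge0}\to\mathbb{R}_{\ge0}$; the state evolves by $x_0=0$, $x_{k+1}=x_k+\pi_k(x_k)-w_k$. A policy is admissible if $x_k\ge0$ almost surely for all $k\in\{1,\dots,N\}$. Its expected cost is $J_\pi(0)=\sum_{k=0}^{N-1}\mathbb{E}[G(\pi_k(x_k))]$,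 and $J^*(0)$ denotes the infimum of $J_\pi(0)$ over admissible policies (the optimal cost). The myopic policy is $\pi^{\mathrm{my}}_k(x)=\max\{0,\mu_k+\Delta-x\}$. Block-averaging procedure $\mathrm{LS}$: given a finite sequence $v=(v_0,\dots,v_{N-1})$ of positive reals, define indices $0=k_0<k_1<\dots<k_n=N$ recursively: if $k_l<N$, let $k_{l+1}=k_l+j^*$, where $j^*$ is the largest element of $\arg\max_{j\in\{1,\dots,N-k_l\}}\frac{1}{j}\sum_{i=k_l}^{k_l+j-1}v_i$; stop when $k_n=N$. Then $\mathrm{LS}(v)=(u_0,\dots,u_{N-1})$ with $u_i=\frac{1}{k_{l+1}-k_l}\sum_{m=k_l}^{k_{l+1}-1}v_m$ for $k_l\le i<k_{l+1}$. *)

theory Defs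
  imports "HOL-Probability.Probability"
begin

definition strictly_convex_on :: "real set \<Rightarrow> (real \<Rightarrow> real) \<Rightarrow> bool" where
  "strictly_convex_on S f \<longleftrightarrow>
     (\<forall>x\<in>S. \<forall>y\<in>S. \<forall>t. x \<noteq> y \<and> 0 < t \<and> t < 1 \<longrightarrow>
        f (t * x + (1 - t) * y) < t * f x + (1 - t) * f y)"

definition rv_support :: "'a measure \<Rightarrow> ('a \<Rightarrow> real) \<Rightarrow> real set" where
  "rv_support M X = {x. \<forall>e>0. measure M {\<omega> \<in> space M. \<bar>X \<omega> - x\<bar> < e} > 0}"

fun state :: "(nat \<Rightarrow> real \<Rightarrow> real) \<Rightarrow> (nat \<Rightarrow> 'a \<Rightarrow> real) \<Rightarrow> nat \<Rightarrow> 'a \<Rightarrow> real" where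
  "state \<pi> w 0 \<omega> = 0"
| "state \<pi> w (Suc k) \<omega> = state \<pi> w k \<omega> + \<pi> k (state \<pi> w k \<omega>) - w k \<omega>"

text \<open>Policies: measurable maps with nonnegative values (the value at negative
  arguments is a harmless convention, only ever used on null sets).\<close>
definition is_policy :: "nat \<Rightarrow> (nat \<Rightarrow> real \<Rightarrow> real) \<Rightarrow> bool" where
  "is_policy N \<pi> \<longleftrightarrow> (\<forall>k<N. \<pi> k \<in> borel_measurable borel \<and> (\<forall>x. 0 \<le> \<pi> k x))"

definition admissible :: "'a measure \<Rightarrow> (nat \<Rightarrow> 'a \<Rightarrow> real) \<Rightarrow> nat \<Rightarrow> (nat \<Rightarrow> real \<Rightarrow> real) \<Rightarrow> bool" where
  "admissible M w N \<pi> \<longleftrightarrow> is_policy N \<pi> \<and>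
     (\<forall>k\<in>{1..N}. AE \<omega> in M. 0 \<le> state \<pi> w k \<omega>)"

definition cost :: "'a measure \<Rightarrow> (real \<Rightarrow> real) \<Rightarrow> (nat \<Rightarrow> 'a \<Rightarrow> real) \<Rightarrow> nat
     \<Rightarrow> (nat \<Rightarrow> real \<Rightarrow> real) \<Rightarrow> ennreal" where
  "cost M G w N \<pi> = (\<Sum>k<N. \<integral>\<^sup>+ \<omega>. ennreal (G (\<pi> k (state \<pi> w k \<omega>))) \<partial>M)"

definition opt_cost :: "'a measure \<Rightarrow> (real \<Rightarrow> real) \<Rightarrow> (nat \<Rightarrow> 'a \<Rightarrow> real) \<Rightarrow> nat \<Rightarrow> ennreal" where
  "opt_cost M G w N = (INF \<pi> \<in> {\<pi>. admissible M w N \<pi>}. cost M G w N \<pi>)"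

definition myopic :: "(nat \<Rightarrow> real) \<Rightarrow> real \<Rightarrow> nat \<Rightarrow> real \<Rightarrow> real" where
  "myopic \<mu> \<Delta> k x = max 0 (\<mu> k + \<Delta> - x)"

definition avg :: "(nat \<Rightarrow> real) \<Rightarrow> nat \<Rightarrow> nat \<Rightarrow> real" where
  "avg v a j = (\<Sum>i = a..<a + j. v i) / real j"

definition blk :: "(nat \<Rightarrow> real) \<Rightarrow> nat \<Rightarrow> nat \<Rightarrow> nat" where
  "blk v N a = (GREATEST j. j \<in> {1..N - a} \<and> (\<forall>i\<in>{1..N - a}. avg v a i \<le> avg v a j))"

fun brk :: "(nat \<Rightarrow> real) \<Rightarrow> nat \<Rightarrow> nat \<Rightarrow> nat" where
  "brk v N 0 = 0"
| "brk v N (Suc l) = (if brk v N l < N then brk v N l + blk v N (brk v N l) else brk v N l)"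

definition LS :: "(nat \<Rightarrow> real) \<Rightarrow> nat \<Rightarrow> nat \<Rightarrow> real" where
  "LS v N i = (let l = (LEAST l. i < brk v N (Suc l))
               in avg v (brk v N l) (brk v N (Suc l) - brk v N l))"

end

theory Submission
  imports Defs
begin

text \<open>The bounds \<open>l \<le> G'' \<le> L\<close> sandwich \<open>G\<close> between two quadratics touching it at the average
  order level \<open>Mb\<close>. Almost surely every demand lies in its support interval, so an order-up-to policy
  whose period-\<open>k\<close> order has mean \<open>a k > \<Delta>\<close> orders \<open>a k\<close> plus the deviation of the previous demand
  from its mean; its expected cost therefore lies between
  \<open>\<Sum>k. G Mb + G' Mb * (a k - Mb) + c/2 * ((a k - Mb)\<^sup>2 + \<sigma>\<^sub>k\<^sub>-\<^sub>1\<^sup>2)\<close> for \<open>c = l\<close> and \<open>c = L\<close>, and the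
  linear terms cancel when \<open>\<Sum>k. a k = N * Mb\<close>. The myopic policy is such a policy with
  \<open>a = (\<mu>\<^sub>0 + \<Delta>, \<mu>\<^sub>1, \<dots>)\<close>; the one with \<open>a = LS (\<mu>\<^sub>0 + \<Delta>, \<mu>\<^sub>1, \<dots>)\<close> is admissible because the prefix
  sums of \<open>LS v\<close> dominate those of \<open>v\<close>, so it bounds the optimal cost from above. Only the marginal
  laws of the demands enter.\<close>

lemma blk_maximal:
  assumes "a < N"
  shows "1 \<le> blk v N a" and "blk v N a \<le> N - a"
    and "\<And>j. j \<in> {1..N - a} \<Longrightarrow> avg v a j \<le> avg v a (blk v N a)"
proof -
  let ?S = "{1..N - a}"
  have fin: "finite (avg v a ` ?S)" and ne: "avg v a ` ?S \<noteq> {}"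
    using assms by auto
  obtain j where j: "j \<in> ?S" "avg v a j = Max (avg v a ` ?S)"
    using Max_in[OF fin ne] by auto
  have "blk v N a \<in> ?S \<and> (\<forall>i\<in>?S. avg v a i \<le> avg v a (blk v N a))"
    unfolding blk_def by (rule GreatestI_nat[where k = j and b = "N - a"]) (use j fin in auto)
  then show "1 \<le> blk v N a" "blk v N a \<le> N - a"
    and "\<And>j. j \<in> ?S \<Longrightarrow> avg v a j \<le> avg v a (blk v N a)"
    by auto
qed

lemma brk_le: "brk v N l \<le> N"
  by (induction l) (auto dest: blk_maximal(2)[of _ N v])

lemma min_le_brk: "min l N \<le> brk v N l"
proof (induction l)
  case (Suc l)
  then show ?case
    using blk_maximal(1)[of "brk v N l" N v] brk_le[of v N l] by (cases "brk v N l < N") auto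
qed simp

lemma brk_le_brk_Suc: "brk v N l \<le> brk v N (Suc l)"
  by simp

lemma brk_mono: "l \<le> l' \<Longrightarrow> brk v N l \<le> brk v N l'"
  by (induction l' rule: dec_induct) (auto intro: order_trans[OF _ brk_le_brk_Suc])

lemma brk_N: "brk v N N = N"
  using brk_le[of v N N] min_le_brk[of N N v] by simp

lemma LS_eq_block_avg:
  assumes "brk v N l \<le> i" "i < brk v N (Suc l)"
  shows "LS v N i = avg v (brk v N l) (brk v N (Suc l) - brk v N l)"
proof -
  have "(LEAST l. i < brk v N (Suc l)) = l"
  proof (rule Least_equality)
    fix l' assume "i < brk v N (Suc l')"
    then show "l \<le> l'"
      using assms brk_mono[of "Suc l'" l v N] by (cases "l \<le> l'") auto
  qed (fact assms(2))
  then show ?thesis unfolding LS_def Let_def by simp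
qed

lemma brk_enclosing_block:
  assumes "i < N"
  obtains l where "brk v N l \<le> i" "i < brk v N (Suc l)"
proof -
  have ex: "\<exists>l. i < brk v N (Suc l)"
    using min_le_brk[of "Suc N" N v] assms by (intro exI[of _ N]) auto
  define l where "l = (LEAST l. i < brk v N (Suc l))"
  have "i < brk v N (Suc l)"
    unfolding l_def by (rule LeastI_ex[OF ex])
  moreover have "brk v N l \<le> i"
  proof (cases l)
    case (Suc l')
    have "\<not> i < brk v N (Suc l')"
      using Suc not_less_Least[of l' "\<lambda>l. i < brk v N (Suc l)"] unfolding l_def by auto
    then show ?thesis using Suc by simp
  qed simp
  ultimately show ?thesis using that by blast
qed

lemma sum_eq_mult_avg: "1 \<le> j \<Longrightarrow> (\<Sum>i = a..<a + j. v i) = real j * avg v a j"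
  unfolding avg_def by simp

lemma sum_LS_block:
  assumes "brk v N l < N"
  shows "(\<Sum>i = brk v N l..<brk v N (Suc l). LS v N i) = (\<Sum>i = brk v N l..<brk v N (Suc l). v i)"
proof -
  let ?a = "brk v N l" and ?j = "blk v N (brk v N l)"
  have next_brk: "brk v N (Suc l) = ?a + ?j"
    using assms by simp
  have "(\<Sum>i = ?a..<brk v N (Suc l). LS v N i) = (\<Sum>i = ?a..<?a + ?j. avg v ?a ?j)"
    using LS_eq_block_avg[of v N l] next_brk by (intro sum.cong) auto
  also have "\<dots> = (\<Sum>i = ?a..<?a + ?j. v i)"
    using sum_eq_mult_avg[OF blk_maximal(1)[OF assms]] by simp
  finally show ?thesis using next_brk by simp
qed

lemma sum_LS_upto_brk: "(\<Sum>i<brk v N l. LS v N i) = (\<Sum>i<brk v N l. v i)"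
proof (induction l)
  case (Suc l)
  have split: "(\<Sum>i<brk v N (Suc l). f i) = (\<Sum>i<brk v N l. f i) + (\<Sum>i = brk v N l..<brk v N (Suc l). f i)"
    for f :: "nat \<Rightarrow> real"
    using brk_le_brk_Suc[of v N l] by (metis atLeast0LessThan le0 sum.atLeastLessThan_concat)
  show ?case
    using Suc sum_LS_block[of v N l] by (cases "brk v N l < N") (simp_all only: split, auto)
qed simp

lemma sum_LS: "(\<Sum>i<N. LS v N i) = (\<Sum>i<N. v i)"
  using sum_LS_upto_brk[of v N N] by (simp add: brk_N)

text \<open>Block lengths maximise the average, so every initial segment of a block averages at most the
  block average.\<close>
lemma sum_le_sum_LS:
  assumes "k \<le> N"
  shows "(\<Sum>i<k. v i) \<le> (\<Sum>i<k. LS v N i)"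
proof (cases "k = N")
  case False
  then have "k < N" using assms by simp
  then obtain l where l: "brk v N l \<le> k" "k < brk v N (Suc l)"
    by (rule brk_enclosing_block)
  let ?a = "brk v N l" and ?j = "blk v N (brk v N l)"
  have a_lt: "?a < N" using l \<open>k < N\<close> by simp
  have next_brk: "brk v N (Suc l) = ?a + ?j"
    using a_lt by simp
  have split: "(\<Sum>i<k. f i) = (\<Sum>i<?a. f i) + (\<Sum>i = ?a..<k. f i)" for f :: "nat \<Rightarrow> real"
    using l by (metis atLeast0LessThan le0 sum.atLeastLessThan_concat)
  have LS_part: "(\<Sum>i = ?a..<k. LS v N i) = real (k - ?a) * avg v ?a ?j"
    using LS_eq_block_avg[of v N l] l next_brk by (simp add: sum.cong[OF refl, of _ _ "\<lambda>_. avg v ?a ?j"])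
  have "(\<Sum>i = ?a..<k. v i) \<le> real (k - ?a) * avg v ?a ?j"
  proof (cases "k = ?a")
    case False
    then have "(\<Sum>i = ?a..<k. v i) = real (k - ?a) * avg v ?a (k - ?a)"
      using sum_eq_mult_avg[of "k - ?a" v ?a] l by simp
    also have "\<dots> \<le> real (k - ?a) * avg v ?a ?j"
    proof -
      have "k - ?a \<in> {1..N - ?a}" using False l \<open>k < N\<close> by auto
      then show ?thesis by (intro mult_left_mono blk_maximal(3)[OF a_lt]) auto
    qed
    finally show ?thesis .
  qed simp
  then show ?thesis
    using LS_part split[of v] split[of "LS v N"] sum_LS_upto_brk[of v N l] by simp
qed (simp add: sum_LS)

lemma LS_gt:
  assumes "i < N" and "\<And>i. i < N \<Longrightarrow> c < v i"
  shows "c < LS v N i"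
proof -
  obtain l where l: "brk v N l \<le> i" "i < brk v N (Suc l)"
    using brk_enclosing_block[OF assms(1)] .
  let ?a = "brk v N l" and ?j = "blk v N (brk v N l)"
  have a_lt: "?a < N" using l assms(1) by simp
  have j: "1 \<le> ?j" "?j \<le> N - ?a"
    using blk_maximal[OF a_lt] by auto
  have "real ?j * c = (\<Sum>i = ?a..<?a + ?j. c)" by simp
  also have "\<dots> < (\<Sum>i = ?a..<?a + ?j. v i)"
    using j by (intro sum_strict_mono) (auto intro: assms(2))
  finally have "c < avg v ?a ?j"
    using sum_eq_mult_avg[OF j(1)] j(1) by (simp add: mult_less_cancel_left_pos)
  then show ?thesis
    using LS_eq_block_avg[OF l] a_lt by simp
qed

lemma AE_in_rv_support:
  assumes "prob_space M" and X: "X \<in> borel_measurable M"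
  shows "AE \<omega> in M. X \<omega> \<in> rv_support M X"
proof -
  interpret prob_space M by fact
  define I where "I = {(p, r). p \<in> \<rat> \<and> r \<in> \<rat> \<and> prob {\<omega> \<in> space M. p < X \<omega> \<and> X \<omega> < r} = 0}"
  define A where "A = (\<lambda>(p, r). {\<omega> \<in> space M. p < X \<omega> \<and> X \<omega> < r})"
  have "countable I"
    by (rule countable_subset[of _ "\<rat> \<times> \<rat>"]) (auto simp: I_def countable_rat)
  moreover have "A i \<in> null_sets M" if "i \<in> I" for i
  proof -
    obtain p r where i: "i = (p, r)" "prob {\<omega> \<in> space M. p < X \<omega> \<and> X \<omega> < r} = 0"
      using \<open>i \<in> I\<close> unfolding I_def by auto
    have "{\<omega> \<in> space M. p < X \<omega> \<and> X \<omega> < r} \<in> sets M" using X by measurable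
    then show ?thesis using i by (simp add: A_def null_sets_def emeasure_eq_measure)
  qed
  ultimately have null: "(\<Union>i\<in>I. A i) \<in> null_sets M"
    using null_sets_UN' by blast
  show ?thesis
  proof (rule AE_I'[OF null], safe)
    fix \<omega> assume \<omega>: "\<omega> \<in> space M" "X \<omega> \<notin> rv_support M X"
    obtain e where e: "e > 0" "\<not> prob {\<omega>' \<in> space M. \<bar>X \<omega>' - X \<omega>\<bar> < e} > 0"
      using \<omega>(2) unfolding rv_support_def by auto
    obtain p where p: "p \<in> \<rat>" "X \<omega> - e < p" "p < X \<omega>"
      using Rats_dense_in_real[of "X \<omega> - e" "X \<omega>"] e(1) by auto
    obtain r where r: "r \<in> \<rat>" "X \<omega> < r" "r < X \<omega> + e"
      using Rats_dense_in_real[of "X \<omega>" "X \<omega> + e"] e(1) by auto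
    have "{\<omega>' \<in> space M. \<bar>X \<omega>' - X \<omega>\<bar> < e} \<in> sets M" using X by measurable
    then have "prob {\<omega>' \<in> space M. p < X \<omega>' \<and> X \<omega>' < r} \<le> prob {\<omega>' \<in> space M. \<bar>X \<omega>' - X \<omega>\<bar> < e}"
      using p r by (intro finite_measure_mono) auto
    then have "prob {\<omega>' \<in> space M. p < X \<omega>' \<and> X \<omega>' < r} = 0"
      using e(2) measure_nonneg[of M "{\<omega>' \<in> space M. p < X \<omega>' \<and> X \<omega>' < r}"] by linarith
    then have "(p, r) \<in> I"
      using p r unfolding I_def by auto
    moreover have "\<omega> \<in> A (p, r)" using \<omega> p r unfolding A_def by auto
    ultimately show "\<omega> \<in> (\<Union>i\<in>I. A i)" by auto
  qed
qed

lemma tangent_le_of_second_deriv_nonneg: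
  fixes F F' F'' :: "real \<Rightarrow> real"
  assumes F: "\<And>y. y > 0 \<Longrightarrow> (F has_real_derivative F' y) (at y)"
    and F': "\<And>y. y > 0 \<Longrightarrow> (F' has_real_derivative F'' y) (at y)"
    and F''_nonneg: "\<And>y. y > 0 \<Longrightarrow> 0 \<le> F'' y"
    and "x > 0" and "m > 0"
  shows "F m + F' m * (x - m) \<le> F x"
proof -
  define h where "h = (\<lambda>x. F x - F m - F' m * (x - m))"
  have h_deriv: "(h has_real_derivative (F' y - F' m)) (at y)" if "y > 0" for y
    unfolding h_def using F[OF that] by (auto intro!: derivative_eq_intros)
  have F'_mono: "F' a \<le> F' b" if "0 < a" "a \<le> b" for a b
    by (rule DERIV_nonneg_imp_nondecreasing[OF that(2)]) (meson F' F''_nonneg less_le_trans that(1))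
  have "h m \<le> h x"
  proof (cases "m \<le> x")
    case True
    show ?thesis
    proof (rule DERIV_nonneg_imp_nondecreasing[OF True])
      fix t assume "m \<le> t" "t \<le> x"
      then show "\<exists>y. (h has_real_derivative y) (at t) \<and> 0 \<le> y"
        using h_deriv[of t] F'_mono[of m t] \<open>m > 0\<close> by auto
    qed
  next
    case False
    show ?thesis
    proof (rule DERIV_nonpos_imp_nonincreasing[of x m])
      fix t assume "x \<le> t" "t \<le> m"
      then show "\<exists>y. (h has_real_derivative y) (at t) \<and> y \<le> 0"
        using h_deriv[of t] F'_mono[of t m] \<open>x > 0\<close> by auto
    qed (use False in simp)
  qed
  then show ?thesis unfolding h_def by simp
qed

lemma quadratic_bounds_of_second_deriv:
  fixes G G' G'' :: "real \<Rightarrow> real"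
  assumes G: "\<And>y. y > 0 \<Longrightarrow> (G has_real_derivative G' y) (at y)"
    and G': "\<And>y. y > 0 \<Longrightarrow> (G' has_real_derivative G'' y) (at y)"
    and G''_bounds: "\<And>y. y > 0 \<Longrightarrow> l \<le> G'' y \<and> G'' y \<le> L"
    and x: "x > 0" and m: "m > 0"
  shows "G m + G' m * (x - m) + l / 2 * (x - m)\<^sup>2 \<le> G x"
    and "G x \<le> G m + G' m * (x - m) + L / 2 * (x - m)\<^sup>2"
proof -
  have "G m - l / 2 * m\<^sup>2 + (G' m - l * m) * (x - m) \<le> G x - l / 2 * x\<^sup>2"
    using G G' G''_bounds x m
    by (intro tangent_le_of_second_deriv_nonneg[where F = "\<lambda>x. G x - l / 2 * x\<^sup>2"
          and F'' = "\<lambda>x. G'' x - l"]) (auto intro!: derivative_eq_intros)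
  then show "G m + G' m * (x - m) + l / 2 * (x - m)\<^sup>2 \<le> G x"
    by (simp add: power2_eq_square algebra_simps)
  have "L / 2 * m\<^sup>2 - G m + (L * m - G' m) * (x - m) \<le> L / 2 * x\<^sup>2 - G x"
    using G G' G''_bounds x m
    by (intro tangent_le_of_second_deriv_nonneg[where F = "\<lambda>x. L / 2 * x\<^sup>2 - G x"
          and F'' = "\<lambda>x. L - G'' x"]) (auto intro!: derivative_eq_intros)
  then show "G x \<le> G m + G' m * (x - m) + L / 2 * (x - m)\<^sup>2"
    by (simp add: power2_eq_square algebra_simps)
qed

lemma (in prob_space) expectation_quadratic:
  fixes Y :: "'a \<Rightarrow> real"
  assumes "integrable M Y" and "integrable M (\<lambda>\<omega>. (Y \<omega>)\<^sup>2)"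
  shows "expectation (\<lambda>\<omega>. a + b * (Y \<omega> - m) + c * (Y \<omega> - m)\<^sup>2)
    = a + b * (expectation Y - m) + c * ((expectation Y - m)\<^sup>2 + variance Y)"
proof -
  have "(\<lambda>\<omega>. a + b * (Y \<omega> - m) + c * (Y \<omega> - m)\<^sup>2)
      = (\<lambda>\<omega>. (a - b * m + c * m\<^sup>2) + (b - 2 * c * m) * Y \<omega> + c * (Y \<omega>)\<^sup>2)"
    by (auto simp: fun_eq_iff power2_eq_square algebra_simps)
  then show ?thesis
    using assms by (simp add: variance_eq prob_space power2_eq_square algebra_simps)
qed

lemma (in prob_space) nn_integral_quadratic_bounds:
  fixes G G' G'' :: "real \<Rightarrow> real" and Y :: "'a \<Rightarrow> real"
  assumes G_mono: "mono_on {0..} G" and G_nonneg: "\<And>y. 0 \<le> y \<Longrightarrow> 0 \<le> G y"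
    and G: "\<And>y. y > 0 \<Longrightarrow> (G has_real_derivative G' y) (at y)"
    and G': "\<And>y. y > 0 \<Longrightarrow> (G' has_real_derivative G'' y) (at y)"
    and G''_bounds: "\<And>y. y > 0 \<Longrightarrow> l \<le> G'' y \<and> G'' y \<le> L"
    and Y: "Y \<in> borel_measurable M" and Y_bounds: "AE \<omega> in M. 0 < Y \<omega> \<and> Y \<omega> \<le> b"
    and m: "m > 0"
  obtains E where "(\<integral>\<^sup>+\<omega>. ennreal (G (Y \<omega>)) \<partial>M) = ennreal E" and "0 \<le> E"
    and "G m + G' m * (expectation Y - m) + l / 2 * ((expectation Y - m)\<^sup>2 + variance Y) \<le> E"
    and "E \<le> G m + G' m * (expectation Y - m) + L / 2 * ((expectation Y - m)\<^sup>2 + variance Y)"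
proof -
  text \<open>Truncating at 0 makes the integrand measurable; it changes nothing almost surely.\<close>
  define h where "h = (\<lambda>\<omega>. G (max 0 (Y \<omega>)))"
  have "mono (\<lambda>x. G (max 0 x))"
    by (rule monoI) (auto intro!: mono_onD[OF G_mono])
  then have h_meas: "h \<in> borel_measurable M"
    unfolding h_def using measurable_compose[OF Y borel_measurable_mono] by (simp add: o_def)
  have h_bounds: "AE \<omega> in M. 0 \<le> h \<omega> \<and> h \<omega> \<le> G b"
    using Y_bounds by eventually_elim (auto simp: h_def G_nonneg intro: mono_onD[OF G_mono])
  have h_int: "integrable M h"
    using h_bounds h_meas by (intro integrable_const_bound[where B = "G b"]) (auto elim: eventually_mono)
  have "(\<integral>\<^sup>+\<omega>. ennreal (G (Y \<omega>)) \<partial>M) = (\<integral>\<^sup>+\<omega>. ennreal (h \<omega>) \<partial>M)"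
    using Y_bounds by (intro nn_integral_cong_AE) (auto simp: h_def elim: eventually_mono)
  also have "\<dots> = ennreal (expectation h)"
    using h_bounds by (intro nn_integral_eq_integral[OF h_int]) (auto elim: eventually_mono)
  finally have nn_eq: "(\<integral>\<^sup>+\<omega>. ennreal (G (Y \<omega>)) \<partial>M) = ennreal (expectation h)" .
  have Y_int: "integrable M Y"
    using Y_bounds Y by (intro integrable_const_bound[where B = b]) (auto elim: eventually_mono)
  have Y2_int: "integrable M (\<lambda>\<omega>. (Y \<omega>)\<^sup>2)"
  proof (rule integrable_const_bound[where B = "b\<^sup>2"])
    show "AE \<omega> in M. norm ((Y \<omega>)\<^sup>2) \<le> b\<^sup>2"
      using Y_bounds by eventually_elim (simp add: power_mono)
  qed (use Y in measurable)
  define Q where "Q = (\<lambda>c \<omega>. G m + G' m * (Y \<omega> - m) + c / 2 * (Y \<omega> - m)\<^sup>2)"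
  have Q_int: "integrable M (Q c)" for c
    unfolding Q_def using Y_int Y2_int by (auto simp: power2_diff)
  have Q_exp: "expectation (Q c)
      = G m + G' m * (expectation Y - m) + c / 2 * ((expectation Y - m)\<^sup>2 + variance Y)" for c
    unfolding Q_def by (rule expectation_quadratic[OF Y_int Y2_int])
  have "expectation (Q l) \<le> expectation h"
    using Y_bounds quadratic_bounds_of_second_deriv(1)[OF G G' G''_bounds _ m]
    by (intro integral_mono_AE Q_int h_int) (auto simp: Q_def h_def elim: eventually_mono)
  moreover have "expectation h \<le> expectation (Q L)"
    using Y_bounds quadratic_bounds_of_second_deriv(2)[OF G G' G''_bounds _ m]
    by (intro integral_mono_AE Q_int h_int) (auto simp: Q_def h_def elim: eventually_mono)
  moreover have "0 \<le> expectation h"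
    using h_bounds by (intro integral_nonneg_AE) (auto elim: eventually_mono)
  ultimately show ?thesis
    using that nn_eq Q_exp by metis
qed

definition base_stock :: "(nat \<Rightarrow> real) \<Rightarrow> nat \<Rightarrow> real \<Rightarrow> real" where
  "base_stock T k x = max 0 (T k - x)"

lemma base_stock_eq: "x \<le> T k \<Longrightarrow> base_stock T k x = T k - x"
  by (simp add: base_stock_def)

text \<open>Order-up-to levels under which the period-\<open>k\<close> order is \<open>a k\<close>, plus the deviation of the previous
  demand from its mean when \<open>k > 0\<close>.\<close>
definition base_stock_levels :: "(nat \<Rightarrow> real) \<Rightarrow> (nat \<Rightarrow> real) \<Rightarrow> nat \<Rightarrow> real" where
  "base_stock_levels a \<mu> k = (\<Sum>i<Suc k. a i) - (\<Sum>i<k. \<mu> i)"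

lemma state_le_base_stock:
  assumes "0 \<le> T 0" and "\<And>j. Suc j < N \<Longrightarrow> T j - w j \<omega> \<le> T (Suc j)" and "k < N"
  shows "state (base_stock T) w k \<omega> \<le> T k"
  using assms(3)
proof (induction k)
  case (Suc k)
  then have "state (base_stock T) w (Suc k) \<omega> = T k - w k \<omega>"
    by (simp add: base_stock_eq)
  then show ?case using assms(2)[OF Suc.prems] by simp
qed (simp add: assms(1))

lemma base_stock_levels_dynamics:
  fixes a \<mu> :: "nat \<Rightarrow> real"
  defines "T \<equiv> base_stock_levels a \<mu>"
  assumes "0 \<le> \<Delta>" and a: "\<And>k. k < N \<Longrightarrow> \<Delta> \<le> a k"
    and w: "\<And>k. k < N \<Longrightarrow> \<mu> k - \<Delta> \<le> w k \<omega>" and "k < N"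
  shows "state (base_stock T) w (Suc k) \<omega> = T k - w k \<omega>"
    and "base_stock T k (state (base_stock T) w k \<omega>)
      = (if k = 0 then a 0 else a k + (w (k - 1) \<omega> - \<mu> (k - 1)))"
proof -
  have state_le: "state (base_stock T) w j \<omega> \<le> T j" if "j < N" for j
  proof (rule state_le_base_stock[OF _ _ that])
    show "0 \<le> T 0" using a[of 0] \<open>0 \<le> \<Delta>\<close> \<open>k < N\<close> by (simp add: T_def base_stock_levels_def)
    show "T j - w j \<omega> \<le> T (Suc j)" if "Suc j < N" for j
      using a[OF that] w[of j] that by (simp add: T_def base_stock_levels_def)
  qed
  then show state_Suc: "state (base_stock T) w (Suc k) \<omega> = T k - w k \<omega>"
    using \<open>k < N\<close> by (simp add: base_stock_eq)
  show "base_stock T k (state (base_stock T) w k \<omega>)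
      = (if k = 0 then a 0 else a k + (w (k - 1) \<omega> - \<mu> (k - 1)))"
  proof (cases k)
    case (Suc j)
    have "state (base_stock T) w k \<omega> = T j - w j \<omega>"
      using state_le[of j] Suc \<open>k < N\<close> by (simp add: base_stock_eq)
    then show ?thesis
      using state_le[OF \<open>k < N\<close>] Suc by (simp add: base_stock_eq T_def base_stock_levels_def)
  qed (use a[of 0] \<open>0 \<le> \<Delta>\<close> \<open>k < N\<close> in \<open>simp add: base_stock_def T_def base_stock_levels_def\<close>)
qed

lemma sum_quadratic_expansion:
  fixes a s :: "nat \<Rightarrow> real"
  shows "(\<Sum>k<N. A + B * (a k - m) + c / 2 * ((a k - m)\<^sup>2 + s k))
    = real N * A + B * ((\<Sum>k<N. a k) - real N * m) + c / 2 * ((\<Sum>k<N. (a k - m)\<^sup>2) + (\<Sum>k<N. s k))"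
  by (simp add: sum.distrib sum_distrib_left sum_subtractf algebra_simps)

lemma sum_shifted:
  fixes s :: "nat \<Rightarrow> real"
  shows "(\<Sum>k<N. if k = 0 then 0 else s (k - 1)) = (\<Sum>k<N - 1. s k)"
  by (cases N) (simp_all only: sum.lessThan_Suc_shift, simp_all)

lemma enn2ereal_diff_ge:
  assumes "x \<le> ennreal c'" and "0 \<le> c" and "0 \<le> c'"
  shows "ereal (c - c') \<le> enn2ereal (ennreal c) - enn2ereal x"
proof -
  have "enn2ereal x \<le> ereal c'"
    using assms(1,3) by (simp add: less_eq_ennreal.rep_eq)
  moreover have "0 \<le> enn2ereal x" by simp
  ultimately show ?thesis
    using assms(2) by (cases "enn2ereal x") auto
qed

locale inventory_model = prob_space M
  for M :: "'a measure" +
  fixes G G' G'' :: "real \<Rightarrow> real" and l L :: real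
    and w :: "nat \<Rightarrow> 'a \<Rightarrow> real" and \<mu> \<sigma> :: "nat \<Rightarrow> real" and N :: nat and \<Delta> :: real
  assumes G_mono: "mono_on {0..} G"
    and G_nonneg: "\<And>y. 0 \<le> y \<Longrightarrow> 0 \<le> G y"
    and G_deriv: "\<And>y. y > 0 \<Longrightarrow> (G has_real_derivative G' y) (at y)"
    and G'_deriv: "\<And>y. y > 0 \<Longrightarrow> (G' has_real_derivative G'' y) (at y)"
    and G''_bounds: "\<And>y. y > 0 \<Longrightarrow> l \<le> G'' y \<and> G'' y \<le> L"
    and Delta_nonneg: "0 \<le> \<Delta>"
    and demand_measurable: "\<And>k. k < N \<Longrightarrow> w k \<in> borel_measurable M"
    and demand_mean: "\<And>k. k < N \<Longrightarrow> expectation (w k) = \<mu> k"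
    and demand_variance: "\<And>k. k < N \<Longrightarrow> variance (w k) = (\<sigma> k)\<^sup>2"
    and demand_bounded: "AE \<omega> in M. \<forall>k<N. \<mu> k - \<Delta> \<le> w k \<omega> \<and> w k \<omega> \<le> \<mu> k + \<Delta>"
begin

lemma demand_integrable:
  assumes "k < N"
  shows "integrable M (w k)"
proof (rule integrable_const_bound[where B = "\<bar>\<mu> k\<bar> + \<Delta>"])
  show "AE \<omega> in M. norm (w k \<omega>) \<le> \<bar>\<mu> k\<bar> + \<Delta>"
    using demand_bounded by eventually_elim (use assms in auto)
qed (fact demand_measurable[OF assms])

lemma stage_cost_base_stock:
  fixes a :: "nat \<Rightarrow> real" and k :: nat and m :: real
  defines "\<pi> \<equiv> base_stock (base_stock_levels a \<mu>)"
    and "s \<equiv> (if k = 0 then 0 else (\<sigma> (k - 1))\<^sup>2)"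
  assumes a: "\<And>k. k < N \<Longrightarrow> \<Delta> < a k" and m: "m > 0" and k: "k < N"
  obtains E where "(\<integral>\<^sup>+\<omega>. ennreal (G (\<pi> k (state \<pi> w k \<omega>))) \<partial>M) = ennreal E" and "0 \<le> E"
    and "G m + G' m * (a k - m) + l / 2 * ((a k - m)\<^sup>2 + s) \<le> E"
    and "E \<le> G m + G' m * (a k - m) + L / 2 * ((a k - m)\<^sup>2 + s)"
proof -
  define Y where "Y = (\<lambda>\<omega>. if k = 0 then a 0 else a k + (w (k - 1) \<omega> - \<mu> (k - 1)))"
  have order_eq: "AE \<omega> in M. \<pi> k (state \<pi> w k \<omega>) = Y \<omega>"
    using demand_bounded
  proof eventually_elim
    case (elim \<omega>)
    then show ?case
      unfolding \<pi>_def Y_def by (intro base_stock_levels_dynamics(2)[OF Delta_nonneg _ _ k]) (auto intro: less_imp_le a)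
  qed
  have Y_bounds: "AE \<omega> in M. 0 < Y \<omega> \<and> Y \<omega> \<le> a k + \<Delta>"
    using demand_bounded
  proof eventually_elim
    case (elim \<omega>)
    then have "\<bar>w (k - 1) \<omega> - \<mu> (k - 1)\<bar> \<le> \<Delta>" using k by (auto dest: spec[of _ "k - 1"])
    then show ?case using a[of 0] a[OF k] k Delta_nonneg by (auto simp: Y_def)
  qed
  have Y_meas: "Y \<in> borel_measurable M"
    unfolding Y_def using demand_measurable[of "k - 1"] k by (cases "k = 0") auto
  have Y_mean: "expectation Y = a k"
  proof (cases "k = 0")
    case False
    then show ?thesis
      using demand_integrable[of "k - 1"] demand_mean[of "k - 1"] k by (simp add: Y_def prob_space)
  qed (simp add: Y_def prob_space)
  have Y_variance: "variance Y = s"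
  proof (cases "k = 0")
    case False
    have "(\<lambda>\<omega>. (Y \<omega> - expectation Y)\<^sup>2) = (\<lambda>\<omega>. (w (k - 1) \<omega> - expectation (w (k - 1)))\<^sup>2)"
      using False demand_mean[of "k - 1"] k unfolding Y_mean by (simp add: Y_def)
    then show ?thesis
      using demand_variance[of "k - 1"] False k by (simp add: s_def)
  qed (simp add: Y_def s_def prob_space)
  obtain E where "(\<integral>\<^sup>+\<omega>. ennreal (G (Y \<omega>)) \<partial>M) = ennreal E" "0 \<le> E"
    "G m + G' m * (a k - m) + l / 2 * ((a k - m)\<^sup>2 + s) \<le> E"
    "E \<le> G m + G' m * (a k - m) + L / 2 * ((a k - m)\<^sup>2 + s)"
    using nn_integral_quadratic_bounds[OF G_mono G_nonneg G_deriv G'_deriv G''_bounds Y_meas Y_bounds m,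
        unfolded Y_variance, unfolded Y_mean] .
  moreover have "(\<integral>\<^sup>+\<omega>. ennreal (G (\<pi> k (state \<pi> w k \<omega>))) \<partial>M) = (\<integral>\<^sup>+\<omega>. ennreal (G (Y \<omega>)) \<partial>M)"
    using order_eq by (intro nn_integral_cong_AE) (auto elim: eventually_mono)
  ultimately show ?thesis using that by metis
qed

lemma cost_base_stock_bounds:
  fixes a :: "nat \<Rightarrow> real" and m :: real
  defines "V \<equiv> (\<Sum>k<N - 1. (\<sigma> k)\<^sup>2)"
  assumes a: "\<And>k. k < N \<Longrightarrow> \<Delta> < a k" and "(\<Sum>k<N. a k) = real N * m" and m: "m > 0"
  obtains C where "cost M G w N (base_stock (base_stock_levels a \<mu>)) = ennreal C" and "0 \<le> C"
    and "real N * G m + l / 2 * ((\<Sum>k<N. (a k - m)\<^sup>2) + V) \<le> C"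
    and "C \<le> real N * G m + L / 2 * ((\<Sum>k<N. (a k - m)\<^sup>2) + V)"
proof -
  let ?\<pi> = "base_stock (base_stock_levels a \<mu>)"
  let ?s = "\<lambda>k. if k = 0 then 0 else (\<sigma> (k - 1))\<^sup>2"
  let ?bound = "\<lambda>c k. G m + G' m * (a k - m) + c / 2 * ((a k - m)\<^sup>2 + ?s k)"
  define E where "E k = enn2real (\<integral>\<^sup>+\<omega>. ennreal (G (?\<pi> k (state ?\<pi> w k \<omega>))) \<partial>M)" for k
  have E: "(\<integral>\<^sup>+\<omega>. ennreal (G (?\<pi> k (state ?\<pi> w k \<omega>))) \<partial>M) = ennreal (E k)"
    "0 \<le> E k" "?bound l k \<le> E k" "E k \<le> ?bound L k" if k: "k < N" for k
  proof -
    obtain E' where "(\<integral>\<^sup>+\<omega>. ennreal (G (?\<pi> k (state ?\<pi> w k \<omega>))) \<partial>M) = ennreal E'"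
      "0 \<le> E'" "?bound l k \<le> E'" "E' \<le> ?bound L k"
      by (rule stage_cost_base_stock[where a = a and k = k, OF a m k])
    then show "(\<integral>\<^sup>+\<omega>. ennreal (G (?\<pi> k (state ?\<pi> w k \<omega>))) \<partial>M) = ennreal (E k)"
      "0 \<le> E k" "?bound l k \<le> E k" "E k \<le> ?bound L k"
      by (simp_all add: E_def)
  qed
  have "cost M G w N ?\<pi> = (\<Sum>k<N. ennreal (E k))"
    unfolding cost_def using E(1) by (intro sum.cong) auto
  also have "\<dots> = ennreal (\<Sum>k<N. E k)"
    using E(2) by (intro sum_ennreal) auto
  finally have cost_eq: "cost M G w N ?\<pi> = ennreal (\<Sum>k<N. E k)" .
  have "(\<Sum>k<N. ?bound c k) = real N * G m + c / 2 * ((\<Sum>k<N. (a k - m)\<^sup>2) + V)" for c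
    unfolding sum_quadratic_expansion V_def sum_shifted[where s = "\<lambda>k. (\<sigma> k)\<^sup>2"] using assms(3) by simp
  moreover have "(\<Sum>k<N. ?bound l k) \<le> (\<Sum>k<N. E k)" "(\<Sum>k<N. E k) \<le> (\<Sum>k<N. ?bound L k)"
    using E(3,4) by (auto intro: sum_mono)
  moreover have "0 \<le> (\<Sum>k<N. E k)"
    using E(2) by (auto intro: sum_nonneg)
  ultimately show ?thesis
    by (intro that[OF cost_eq]) simp_all
qed

lemma admissible_base_stock:
  assumes "\<And>k. k < N \<Longrightarrow> \<Delta> \<le> a k"
    and "\<And>k. k < N \<Longrightarrow> (\<Sum>i<Suc k. \<mu> i) + \<Delta> \<le> (\<Sum>i<Suc k. a i)"
  shows "admissible M w N (base_stock (base_stock_levels a \<mu>))"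
  unfolding admissible_def is_policy_def
proof safe
  fix k x show "0 \<le> base_stock (base_stock_levels a \<mu>) k x"
    by (simp add: base_stock_def)
next
  fix k show "base_stock (base_stock_levels a \<mu>) k \<in> borel_measurable borel"
    unfolding base_stock_def by measurable
next
  fix k assume "k \<in> {1..N}"
  then obtain j where j: "k = Suc j" "j < N"
    by (cases k) auto
  show "AE \<omega> in M. 0 \<le> state (base_stock (base_stock_levels a \<mu>)) w k \<omega>"
    using demand_bounded
  proof eventually_elim
    case (elim \<omega>)
    then have "state (base_stock (base_stock_levels a \<mu>)) w k \<omega> = base_stock_levels a \<mu> j - w j \<omega>"
      unfolding j(1) by (intro base_stock_levels_dynamics(1)[OF Delta_nonneg _ _ j(2)]) (auto intro: assms(1))
    then show ?case
      using elim j(2) assms(2)[OF j(2)] by (auto simp: base_stock_levels_def)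
  qed
qed

lemma cost_base_stock_minus_opt_cost_ge:
  fixes a b :: "nat \<Rightarrow> real" and m :: real
  defines "V \<equiv> (\<Sum>k<N - 1. (\<sigma> k)\<^sup>2)"
  assumes a: "\<And>k. k < N \<Longrightarrow> \<Delta> < a k" and sum_a: "(\<Sum>k<N. a k) = real N * m"
    and b: "\<And>k. k < N \<Longrightarrow> \<Delta> < b k" and sum_b: "(\<Sum>k<N. b k) = real N * m"
    and b_prefix: "\<And>k. k < N \<Longrightarrow> (\<Sum>i<Suc k. \<mu> i) + \<Delta> \<le> (\<Sum>i<Suc k. b i)"
    and m: "m > 0"
  shows "ereal (l / 2 * ((\<Sum>k<N. (a k - m)\<^sup>2) + V) - L / 2 * ((\<Sum>k<N. (b k - m)\<^sup>2) + V))
    \<le> enn2ereal (cost M G w N (base_stock (base_stock_levels a \<mu>))) - enn2ereal (opt_cost M G w N)"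
proof -
  obtain C\<^sub>a where C\<^sub>a: "cost M G w N (base_stock (base_stock_levels a \<mu>)) = ennreal C\<^sub>a" "0 \<le> C\<^sub>a"
    "real N * G m + l / 2 * ((\<Sum>k<N. (a k - m)\<^sup>2) + V) \<le> C\<^sub>a"
    using cost_base_stock_bounds[OF a sum_a m] unfolding V_def by blast
  obtain C\<^sub>b where C\<^sub>b: "cost M G w N (base_stock (base_stock_levels b \<mu>)) = ennreal C\<^sub>b" "0 \<le> C\<^sub>b"
    "C\<^sub>b \<le> real N * G m + L / 2 * ((\<Sum>k<N. (b k - m)\<^sup>2) + V)"
    using cost_base_stock_bounds[OF b sum_b m] unfolding V_def by blast
  have "admissible M w N (base_stock (base_stock_levels b \<mu>))"
    using b b_prefix by (intro admissible_base_stock) (auto intro: less_imp_le)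
  then have "opt_cost M G w N \<le> ennreal C\<^sub>b"
    unfolding opt_cost_def C\<^sub>b(1)[symmetric] by (intro INF_lower) simp
  then have "ereal (C\<^sub>a - C\<^sub>b)
      \<le> enn2ereal (cost M G w N (base_stock (base_stock_levels a \<mu>))) - enn2ereal (opt_cost M G w N)"
    using enn2ereal_diff_ge C\<^sub>a(1,2) C\<^sub>b(2) by simp
  moreover have "l / 2 * ((\<Sum>k<N. (a k - m)\<^sup>2) + V) - L / 2 * ((\<Sum>k<N. (b k - m)\<^sup>2) + V) \<le> C\<^sub>a - C\<^sub>b"
    using C\<^sub>a(3) C\<^sub>b(3) by simp
  ultimately show ?thesis
    by (meson ereal_less_eq(3) order_trans)
qed

end

lemma AE_in_support_intervals:
  fixes w :: "nat \<Rightarrow> 'a \<Rightarrow> real" and N :: nat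
  assumes "prob_space M" and "\<And>k. k < N \<Longrightarrow> w k \<in> borel_measurable M"
    and "\<And>k. k < N \<Longrightarrow> rv_support M (w k) = {\<mu> k - \<Delta> .. \<mu> k + \<Delta>}"
  shows "AE \<omega> in M. \<forall>k<N. \<mu> k - \<Delta> \<le> w k \<omega> \<and> w k \<omega> \<le> \<mu> k + \<Delta>"
proof -
  have "AE \<omega> in M. \<forall>k\<in>{..<N}. w k \<omega> \<in> {\<mu> k - \<Delta> .. \<mu> k + \<Delta>}"
    using AE_in_rv_support[OF assms(1) assms(2)] assms(3) by (intro AE_finite_allI) auto
  then show ?thesis
    by (rule eventually_mono) auto
qed

lemma sum_fun_upd_0:
  fixes f :: "nat \<Rightarrow> 'b::comm_monoid_add"
  shows "0 < n \<Longrightarrow> (\<Sum>i<n. (f(0 := f 0 + c)) i) = (\<Sum>i<n. f i) + c"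
  by (cases n) (simp_all only: sum.lessThan_Suc_shift, simp_all add: ac_simps)

theorem theorem2:
  fixes M :: "'a measure" and G G' G'' :: "real \<Rightarrow> real"
    and w :: "nat \<Rightarrow> 'a \<Rightarrow> real" and \<mu> \<sigma> :: "nat \<Rightarrow> real"
    and N :: nat and \<Delta> l L :: real
  assumes "prob_space M"
    and "N \<ge> 1"
    and "strictly_convex_on {0..} G" and "mono_on {0..} G" and "G 0 = 0"
    and "\<And>y. y \<ge> 0 \<Longrightarrow> G y \<ge> 0"
    and "\<And>y. y > 0 \<Longrightarrow> (G has_real_derivative G' y) (at y)"
    and "\<And>y. y > 0 \<Longrightarrow> (G' has_real_derivative G'' y) (at y)"
    and "0 < l" and "l \<le> L"
    and "\<And>y. y > 0 \<Longrightarrow> l \<le> G'' y \<and> G'' y \<le> L"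
    and "\<Delta> \<ge> 0"
    and "\<And>k. k < N \<Longrightarrow> \<mu> k - \<Delta> > 0"
    and "\<And>k. k < N \<Longrightarrow> w k \<in> borel_measurable M"
    and "prob_space.indep_vars M (\<lambda>_. borel) w {..<N}"
    and "\<And>k. k < N \<Longrightarrow> integral\<^sup>L M (w k) = \<mu> k"
    and "\<And>k. k < N \<Longrightarrow> integral\<^sup>L M (\<lambda>\<omega>. (w k \<omega> - integral\<^sup>L M (w k))\<^sup>2) = (\<sigma> k)\<^sup>2"
    and "\<And>k. k < N \<Longrightarrow> rv_support M (w k) = {\<mu> k - \<Delta> .. \<mu> k + \<Delta>}"
  shows
    "let Mb = (\<Delta> + (\<Sum>k<N. \<mu> k)) / real N;
         u = LS (\<mu>(0 := \<mu> 0 + \<Delta>)) N;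
         Su = (\<Sum>k<N. (u k - Mb)\<^sup>2);
         S\<mu> = (\<mu> 0 + \<Delta> - Mb)\<^sup>2 + (\<Sum>k = 1..<N. (\<mu> k - Mb)\<^sup>2);
         V = (\<Sum>k<N - 1. (\<sigma> k)\<^sup>2)
     in enn2ereal (cost M G w N (myopic \<mu> \<Delta>)) - enn2ereal (opt_cost M G w N)
        \<ge> ereal (l / 2 * (S\<mu> + V) - L / 2 * (Su + V))"
proof -
  interpret inventory_model M G G' G'' l L w \<mu> \<sigma> N \<Delta>
    using assms(1,4,6,7,8,11,12,14,16,17) AE_in_support_intervals[OF assms(1,14,18)]
    by (intro inventory_model.intro inventory_model_axioms.intro) assumption+
  define Mb where "Mb = (\<Delta> + (\<Sum>k<N. \<mu> k)) / real N"
  define v where "v = \<mu>(0 := \<mu> 0 + \<Delta>)"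
  have v_gt: "\<Delta> < v k" if "k < N" for k
    using assms(12,13) that by (force simp: v_def)
  have sum_v_prefix: "(\<Sum>i<Suc k. v i) = (\<Sum>i<Suc k. \<mu> i) + \<Delta>" for k
    unfolding v_def by (rule sum_fun_upd_0) simp
  have sum_v: "(\<Sum>k<N. v k) = real N * Mb"
    using sum_v_prefix[of "N - 1"] \<open>N \<ge> 1\<close> by (simp add: Mb_def)
  have "0 < (\<Sum>k<N. v k)"
    using v_gt \<open>N \<ge> 1\<close> \<open>\<Delta> \<ge> 0\<close> by (intro sum_pos) (auto simp: lessThan_empty_iff intro: le_less_trans)
  then have "Mb > 0"
    using sum_v by (simp add: zero_less_mult_iff)
  have "myopic \<mu> \<Delta> = base_stock (base_stock_levels v \<mu>)"
    unfolding base_stock_levels_def sum_v_prefix by (simp add: fun_eq_iff myopic_def base_stock_def)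
  moreover have "(\<Sum>k<N. (v k - Mb)\<^sup>2) = (\<mu> 0 + \<Delta> - Mb)\<^sup>2 + (\<Sum>k = 1..<N. (\<mu> k - Mb)\<^sup>2)"
    using \<open>N \<ge> 1\<close> by (simp add: lessThan_atLeast0 sum.atLeast_Suc_lessThan v_def)
  ultimately show ?thesis
    using cost_base_stock_minus_opt_cost_ge[OF v_gt sum_v LS_gt[OF _ v_gt] _ _ \<open>Mb > 0\<close>]
      sum_le_sum_LS[of "Suc _" N v] sum_v_prefix
    unfolding Let_def Mb_def[symmetric] v_def[symmetric] by (simp add: sum_LS sum_v)
qed

end
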